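(* Let $\alpha\approx1.46557$ be the real root of $x^3-x^2-1$ between $1$ and $2$. Every forest of order $n$ has at most $\alpha^n$ induced matchings, and the number of induced matchings of the path on $n$ vertices is $\Theta(\alpha^n)$.
   Context: An induced matching of a graph $G=(V,E)$ is here a set $D\subseteq V$ such that every vertex of $D$ has exactly one neighbour in $D$ (a $(\{1\},\mathbb{N})$-dominating set); the empty set counts. Order = number of vertices. *)

theory Defs
  imports Complex_Main "HOL-Library.Landau_Symbols"
begin

definition simple_graph :: "'a set \<Rightarrow> ('a \<Rightarrow> 'a \<Rightarrow> bool) \<Rightarrow> bool" where
  "simple_graph V E \<longleftrightarrow> finite V \<and> (\<forall>x y. E x y \<longrightarrow> x \<in> V \<and> y \<in> V)
     \<and> (\<forall>x y. E x y \<longrightarrow> E y x) \<and> (\<forall>x. \<not> E x x)"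

definition is_cycle :: "('a \<Rightarrow> 'a \<Rightarrow> bool) \<Rightarrow> 'a list \<Rightarrow> bool" where
  "is_cycle E cs \<longleftrightarrow> length cs \<ge> 3 \<and> distinct cs
     \<and> (\<forall>i. Suc i < length cs \<longrightarrow> E (cs ! i) (cs ! Suc i))
     \<and> E (last cs) (hd cs)"

definition forest :: "'a set \<Rightarrow> ('a \<Rightarrow> 'a \<Rightarrow> bool) \<Rightarrow> bool" where
  "forest V E \<longleftrightarrow> simple_graph V E \<and> (\<nexists>cs. set cs \<subseteq> V \<and> is_cycle E cs)"

definition induced_matching :: "'a set \<Rightarrow> ('a \<Rightarrow> 'a \<Rightarrow> bool) \<Rightarrow> 'a set \<Rightarrow> bool" where
  "induced_matching V E D \<longleftrightarrow> D \<subseteq> V \<and> (\<forall>v\<in>D. card {u\<in>D. E v u} = 1)"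

definition num_induced_matchings :: "'a set \<Rightarrow> ('a \<Rightarrow> 'a \<Rightarrow> bool) \<Rightarrow> nat" where
  "num_induced_matchings V E = card {D. induced_matching V E D}"

definition path_adj :: "nat \<Rightarrow> nat \<Rightarrow> bool" where
  "path_adj i j \<longleftrightarrow> i + 1 = j \<or> j + 1 = i"

definition alpha :: real where
  "alpha = (THE x. 1 < x \<and> x < 2 \<and> x ^ 3 - x ^ 2 - 1 = 0)"

end

theory Submission
  imports Defs
begin

text \<open>
  A forest is 1-degenerate: every nonempty vertex set \<open>T\<close> contains a vertex with at most one
  neighbour in \<open>T\<close>, namely an end of a longest path in \<open>T\<close>. Let \<open>f(S)\<close> count the induced
  matchings inside \<open>S\<close> and pick such a vertex \<open>v\<close>. An isolated \<open>v\<close> lies in no induced matching.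
  If \<open>v\<close> is a leaf with neighbour \<open>u\<close>, the matchings avoiding \<open>v\<close> are those of \<open>S - v\<close>, while a
  matching containing \<open>v\<close> contains the edge \<open>uv\<close> and, without it, avoids \<open>u\<close> and all its
  neighbours. So \<open>f(n) \<le> f(n - 1) + f(n - 3)\<close> when \<open>u\<close> has another neighbour, and
  \<open>f(n) \<le> 2 f(n - 2)\<close> when \<open>uv\<close> is an isolated edge; both are bounded by \<open>\<alpha>\<^sup>n\<close> because
  \<open>\<alpha>\<^sup>3 = \<alpha>\<^sup>2 + 1\<close> and \<open>\<alpha>\<^sup>2 \<ge> 2\<close>. On the path the first recursion holds in reverse,
  \<open>f(n + 3) \<ge> f(n + 2) + f(n)\<close>, which gives \<open>f(n) \<ge> \<alpha>\<^sup>n / \<alpha>\<^sup>2\<close>.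
\<close>

lemma alpha_root: "1 < alpha \<and> alpha < 2 \<and> alpha ^ 3 - alpha\<^sup>2 - 1 = 0"
proof -
  define p :: "real \<Rightarrow> real" where "p x = x ^ 3 - x\<^sup>2 - 1" for x
  have p_eq: "p x = x\<^sup>2 * (x - 1) - 1" for x
    by (simp add: p_def power3_eq_cube power2_eq_square algebra_simps)
  have p_strict_mono: "p x < p y" if "1 < x" "x < y" for x y
    unfolding p_eq using that by (intro diff_strict_right_mono mult_strict_mono power_strict_mono) auto
  have "\<exists>a\<ge>1. a \<le> 2 \<and> p a = 0"
    by (rule IVT) (auto simp: p_def intro!: continuous_intros)
  then obtain a where "1 \<le> a" "a \<le> 2" "p a = 0"
    by blast
  then have a: "1 < a \<and> a < 2 \<and> p a = 0"
    by (auto simp: le_less p_def)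
  have "alpha = a"
    unfolding alpha_def p_def[symmetric]
    using a p_strict_mono by (intro the_equality) (auto, metis linorder_neqE less_irrefl)
  with a show ?thesis
    by (simp add: p_def)
qed

lemma alpha_gt_one: "1 < alpha"
  using alpha_root by simp

lemma alpha_cube: "alpha ^ 3 = alpha\<^sup>2 + 1"
  using alpha_root by simp

lemma two_le_alpha_squared: "2 \<le> alpha\<^sup>2"
proof (rule ccontr)
  assume "\<not> 2 \<le> alpha\<^sup>2"
  have "alpha\<^sup>2 * (alpha - 1) = 1"
    using alpha_cube by (simp add: power3_eq_cube power2_eq_square algebra_simps)
  moreover have "alpha\<^sup>2 * (alpha - 1) < 2 * (alpha - 1)"
    using \<open>\<not> 2 \<le> alpha\<^sup>2\<close> alpha_gt_one by (intro mult_strict_right_mono) auto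
  ultimately have "1 < 2 * (alpha - 1)"
    by simp
  then have "3 / 2 < alpha"
    by simp
  then have "(3 / 2) ^ 2 < alpha\<^sup>2"
    by (intro power_strict_mono) auto
  with \<open>\<not> 2 \<le> alpha\<^sup>2\<close> show False
    by (simp add: power2_eq_square)
qed

lemma alpha_pow_mono: "m \<le> n \<Longrightarrow> alpha ^ m \<le> alpha ^ n"
  using alpha_gt_one by (simp add: power_increasing)

lemma alpha_pow_recurrence: "alpha ^ (n + 3) = alpha ^ (n + 2) + alpha ^ n"
  by (simp add: power_add alpha_cube distrib_left power2_eq_square)

lemma two_alpha_pow_le: "2 * alpha ^ n \<le> alpha ^ (n + 2)"
  using mult_right_mono[OF two_le_alpha_squared, of "alpha ^ n"] alpha_gt_one
  by (simp add: power_add mult.commute power2_eq_square)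

lemma finite_induced_matchings: "finite S \<Longrightarrow> finite {D. induced_matching S E D}"
  by (rule finite_subset[of _ "Pow S"]) (auto simp: induced_matching_def)

lemma num_induced_matchings_pos: "finite S \<Longrightarrow> 1 \<le> num_induced_matchings S E"
  unfolding num_induced_matchings_def
  using finite_induced_matchings[of S E]
  by (metis One_nat_def Suc_leI card_gt_0_iff empty_iff induced_matching_def
      mem_Collect_eq empty_subsetI)

lemma num_induced_matchings_empty: "num_induced_matchings {} E = 1"
proof -
  have "{D. induced_matching {} E D} = {{}}"
    by (auto simp: induced_matching_def)
  then show ?thesis
    by (simp add: num_induced_matchings_def)
qed

lemma num_induced_matchings_remove_isolated:
  assumes "{u\<in>S. E v u} = {}"
  shows "num_induced_matchings (S - {v}) E = num_induced_matchings S E"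
proof -
  have "v \<notin> D" if "induced_matching S E D" for D
  proof
    assume "v \<in> D"
    with that have "card {u\<in>D. E v u} = 1"
      by (simp add: induced_matching_def)
    moreover have "{u\<in>D. E v u} = {}"
      using assms that by (auto simp: induced_matching_def)
    ultimately show False
      by simp
  qed
  then have "{D. induced_matching (S - {v}) E D} = {D. induced_matching S E D}"
    by (auto simp: induced_matching_def)
  then show ?thesis
    by (simp add: num_induced_matchings_def)
qed

lemma induced_matching_Diff_edge:
  assumes sym: "\<And>x y. E x y \<Longrightarrow> E y x"
    and D: "induced_matching S E D" and "u \<in> D" "v \<in> D" "E u v"
  shows "induced_matching (S - insert u {w. E u w}) E (D - {u, v})"
proof -
  have card1: "card {x\<in>D. E w x} = 1" if "w \<in> D" for w
    using D that by (simp add: induced_matching_def)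
  have unique: "{x\<in>D. E w x} = {y}" if "w \<in> D" "y \<in> D" "E w y" for w y
  proof -
    obtain z where "{x\<in>D. E w x} = {z}"
      using card1[OF \<open>w \<in> D\<close>] by (rule card_1_singletonE)
    with that show ?thesis
      by (metis (mono_tags, lifting) mem_Collect_eq singletonD)
  qed
  have "{x\<in>D. E u x} = {v}" "{x\<in>D. E v x} = {u}"
    using unique sym assms(3-5) by blast+
  then have "{x\<in>D - {u, v}. E w x} = {x\<in>D. E w x}" "\<not> E u w"
    if "w \<in> D - {u, v}" for w
    using that sym by blast+
  with D card1 show ?thesis
    by (auto simp: induced_matching_def)
qed

lemma num_induced_matchings_leaf:
  assumes sym: "\<And>x y. E x y \<Longrightarrow> E y x"
    and "finite S" and leaf: "{x\<in>S. E v x} = {u}"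
  shows "num_induced_matchings S E
    \<le> num_induced_matchings (S - {v}) E + num_induced_matchings (S - insert u {w\<in>S. E u w}) E"
proof -
  define M where "M X = {D. induced_matching X E D}" for X
  define R where "R = S - insert u {w\<in>S. E u w}"
  have fin_M: "finite (M X)" if "X \<subseteq> S" for X
    using \<open>finite S\<close> that by (simp add: M_def finite_induced_matchings finite_subset)
  have "M S \<subseteq> M (S - {v}) \<union> (\<lambda>D. insert u (insert v D)) ` M R"
  proof
    fix D
    assume D: "D \<in> M S"
    show "D \<in> M (S - {v}) \<union> (\<lambda>D. insert u (insert v D)) ` M R"
    proof (cases "v \<in> D")
      case True
      with D have "card {y\<in>D. E v y} = 1"
        by (simp add: M_def induced_matching_def)
      then obtain x where "{y\<in>D. E v y} = {x}"
        by (rule card_1_singletonE)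
      then have "x \<in> D" "E v x"
        by auto
      moreover from this D have "x \<in> {y\<in>S. E v y}"
        by (auto simp: M_def induced_matching_def)
      ultimately have "u \<in> D" "E u v"
        using leaf sym by auto
      then have "induced_matching (S - insert u {w. E u w}) E (D - {u, v})"
        using D True sym by (intro induced_matching_Diff_edge) (auto simp: M_def)
      moreover have "S - insert u {w. E u w} = R"
        by (auto simp: R_def)
      ultimately have "D - {u, v} \<in> M R"
        by (simp add: M_def)
      then show ?thesis
        using True \<open>u \<in> D\<close> by (intro UnI2 image_eqI[of _ _ "D - {u, v}"]) auto
    next
      case False
      with D have "D \<in> M (S - {v})"
        unfolding M_def induced_matching_def by blast
      then show ?thesis ..
    qed
  qed
  then have "card (M S) \<le> card (M (S - {v}) \<union> (\<lambda>D. insert u (insert v D)) ` M R)"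
    by (intro card_mono finite_UnI finite_imageI fin_M) (auto simp: R_def)
  also have "\<dots> \<le> card (M (S - {v})) + card ((\<lambda>D. insert u (insert v D)) ` M R)"
    by (rule card_Un_le)
  also have "\<dots> \<le> card (M (S - {v})) + card (M R)"
    using card_image_le fin_M[of R] by (simp add: R_def)
  finally show ?thesis
    by (simp only: M_def R_def num_induced_matchings_def)
qed

lemma num_induced_matchings_pendant_edge:
  assumes sym: "\<And>x y. E x y \<Longrightarrow> E y x"
    and "finite S" and "{x\<in>S. E v x} = {u}" and "{x\<in>S. E u x} = {v}"
  shows "num_induced_matchings S E \<le> 2 * num_induced_matchings (S - {u, v}) E"
proof -
  have "{x\<in>S - {v}. E u x} = {}"
    using assms(4) by blast
  moreover have "S - {v} - {u} = S - {u, v}"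
    by blast
  ultimately have "num_induced_matchings (S - {v}) E = num_induced_matchings (S - {u, v}) E"
    using num_induced_matchings_remove_isolated[of "S - {v}" E u] by simp
  moreover have "S - insert u {x\<in>S. E u x} = S - {u, v}"
    using assms(4) by simp
  ultimately show ?thesis
    using num_induced_matchings_leaf[of E S v u, OF sym \<open>finite S\<close> assms(3)] by simp
qed

section \<open>One-degenerate graphs\<close>

definition one_degenerate :: "'a set \<Rightarrow> ('a \<Rightarrow> 'a \<Rightarrow> bool) \<Rightarrow> bool" where
  "one_degenerate V E \<longleftrightarrow> (\<forall>T\<subseteq>V. T \<noteq> {} \<longrightarrow> (\<exists>v\<in>T. card {u\<in>T. E v u} \<le> 1))"

lemma one_degenerate_subset: "one_degenerate V E \<Longrightarrow> S \<subseteq> V \<Longrightarrow> one_degenerate S E"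
  by (auto simp: one_degenerate_def)

lemma alpha_pow_bound_pendant_edge:
  assumes sym: "\<And>x y. E x y \<Longrightarrow> E y x"
    and "finite S" "u \<in> S" "v \<in> S" "u \<noteq> v"
    and "{x\<in>S. E v x} = {u}" "{x\<in>S. E u x} = {v}"
    and smaller: "\<And>T. T \<subset> S \<Longrightarrow> real (num_induced_matchings T E) \<le> alpha ^ card T"
  shows "real (num_induced_matchings S E) \<le> alpha ^ card S"
proof -
  have "card {u, v} \<le> card S"
    using assms(2-4) by (intro card_mono) auto
  then have "card S = card (S - {u, v}) + 2"
    using assms(2-5) by (simp add: card_Diff_subset)
  moreover have "real (num_induced_matchings S E) \<le> 2 * alpha ^ card (S - {u, v})"
    using num_induced_matchings_pendant_edge[of E S v u, OF sym assms(2,6,7)]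
      smaller[of "S - {u, v}"] assms(3)
    by fastforce
  ultimately show ?thesis
    using two_alpha_pow_le by (metis order_trans)
qed

lemma alpha_pow_bound_leaf:
  assumes sym: "\<And>x y. E x y \<Longrightarrow> E y x" and irrefl: "\<And>x. \<not> E x x"
    and "finite S" "v \<in> S" and leaf: "{x\<in>S. E v x} = {u}"
    and "w \<in> S" "E u w" "w \<noteq> v"
    and smaller: "\<And>T. T \<subset> S \<Longrightarrow> real (num_induced_matchings T E) \<le> alpha ^ card T"
  shows "real (num_induced_matchings S E) \<le> alpha ^ card S"
proof -
  define N where "N = {w\<in>S. E u w}"
  have "u \<in> S" "u \<noteq> v" "v \<in> N" "w \<in> N"
    using leaf assms(4,6,7) sym irrefl by (auto simp: N_def)
  have "insert u N \<subseteq> S"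
    using \<open>u \<in> S\<close> by (auto simp: N_def)
  then have "finite (insert u N)"
    using \<open>finite S\<close> by (rule finite_subset)
  have "u \<noteq> w"
    using irrefl \<open>E u w\<close> by blast
  then have "3 = card {u, v, w}"
    using \<open>u \<noteq> v\<close> \<open>w \<noteq> v\<close> by simp
  also have "\<dots> \<le> card (insert u N)"
    using \<open>v \<in> N\<close> \<open>w \<in> N\<close> \<open>finite (insert u N)\<close> by (intro card_mono) auto
  finally have "card (S - insert u N) + 3 \<le> card S"
    using card_Diff_subset[OF \<open>finite (insert u N)\<close> \<open>insert u N \<subseteq> S\<close>]
      card_mono[OF \<open>finite S\<close> \<open>insert u N \<subseteq> S\<close>]
    by simp
  then obtain m where m: "card S = m + 3" and "card (S - insert u N) \<le> m"
    by (intro that[of "card S - 3"]) auto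
  have "real (num_induced_matchings S E)
      \<le> real (num_induced_matchings (S - {v}) E) + real (num_induced_matchings (S - insert u N) E)"
    using num_induced_matchings_leaf[of E S v u, OF sym \<open>finite S\<close> leaf] by (simp add: N_def)
  also have "\<dots> \<le> alpha ^ card (S - {v}) + alpha ^ card (S - insert u N)"
    using smaller[of "S - {v}"] smaller[of "S - insert u N"] \<open>v \<in> S\<close> \<open>u \<in> S\<close>
    by (intro add_mono) auto
  also have "\<dots> \<le> alpha ^ (m + 2) + alpha ^ m"
    using m \<open>v \<in> S\<close> \<open>finite S\<close> \<open>card (S - insert u N) \<le> m\<close> by (simp add: alpha_pow_mono)
  finally show ?thesis
    by (simp add: m alpha_pow_recurrence)
qed

theorem num_induced_matchings_le_alpha_pow:
  assumes sym: "\<And>x y. E x y \<Longrightarrow> E y x" and irrefl: "\<And>x. \<not> E x x"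
    and "finite S" and "one_degenerate S E"
  shows "real (num_induced_matchings S E) \<le> alpha ^ card S"
  using assms(3,4)
proof (induction S rule: finite_psubset_induct)
  case (psubset S)
  have smaller: "real (num_induced_matchings T E) \<le> alpha ^ card T" if "T \<subset> S" for T
    using psubset.IH[OF that] one_degenerate_subset[OF psubset.prems] that by blast
  show ?case
  proof (cases "S = {}")
    case True
    then show ?thesis
      by (simp add: num_induced_matchings_empty)
  next
    case False
    then obtain v where "v \<in> S" and "card {u\<in>S. E v u} \<le> 1"
      using psubset.prems by (auto simp: one_degenerate_def)
    moreover have "finite {u\<in>S. E v u}"
      using psubset.hyps by simp
    ultimately consider "{u\<in>S. E v u} = {}" | u where "{u\<in>S. E v u} = {u}"
      by (metis card_0_eq card_1_singletonE le_Suc_eq le_zero_eq One_nat_def)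
    then show ?thesis
    proof cases
      case 1
      then have "num_induced_matchings S E = num_induced_matchings (S - {v}) E"
        by (simp add: num_induced_matchings_remove_isolated)
      also have "real \<dots> \<le> alpha ^ card (S - {v})"
        using smaller[of "S - {v}"] \<open>v \<in> S\<close> by auto
      also have "\<dots> \<le> alpha ^ card S"
        using psubset.hyps by (intro alpha_pow_mono card_mono) auto
      finally show ?thesis
        by simp
    next
      case (2 u)
      then have "u \<in> S" "u \<noteq> v" "v \<in> {w\<in>S. E u w}"
        using \<open>v \<in> S\<close> sym irrefl by auto
      then consider "{w\<in>S. E u w} = {v}" | w where "w \<in> S" "E u w" "w \<noteq> v"
        by blast
      then show ?thesis
      proof cases
        case 1
        show ?thesis
          by (rule alpha_pow_bound_pendant_edge[OF sym psubset.hyps \<open>u \<in> S\<close> \<open>v \<in> S\<close> \<open>u \<noteq> v\<close>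
                \<open>{x\<in>S. E v x} = {u}\<close> 1 smaller])
      next
        case (2 w)
        show ?thesis
          by (rule alpha_pow_bound_leaf[OF sym irrefl psubset.hyps \<open>v \<in> S\<close> \<open>{x\<in>S. E v x} = {u}\<close>
                2 smaller])
      qed
    qed
  qed
qed

section \<open>Forests\<close>

definition is_path :: "('a \<Rightarrow> 'a \<Rightarrow> bool) \<Rightarrow> 'a list \<Rightarrow> bool" where
  "is_path E xs \<longleftrightarrow> distinct xs \<and> (\<forall>i. Suc i < length xs \<longrightarrow> E (xs ! i) (xs ! Suc i))"

lemma is_path_Cons:
  assumes "is_path E xs" "xs \<noteq> []" "y \<notin> set xs" "E y (xs ! 0)"
  shows "is_path E (y # xs)"
  unfolding is_path_def
proof (intro conjI allI impI)
  show "distinct (y # xs)"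
    using assms(1,3) by (simp add: is_path_def)
next
  fix i
  assume "Suc i < length (y # xs)"
  then show "E ((y # xs) ! i) ((y # xs) ! Suc i)"
    using assms by (cases i) (auto simp: is_path_def)
qed

lemma is_cycle_take_chord:
  assumes "is_path E xs" "2 \<le> j" "j < length xs" "E (xs ! j) (xs ! 0)"
  shows "is_cycle E (take (Suc j) xs)"
proof -
  have "last (take (Suc j) xs) = xs ! j"
    using assms(3) by (subst last_conv_nth) auto
  moreover have "hd (take (Suc j) xs) = xs ! 0"
    using assms(3) by (subst hd_conv_nth) auto
  ultimately show ?thesis
    using assms by (auto simp: is_cycle_def is_path_def)
qed

lemma ex_longest_path:
  assumes "finite T" "T \<noteq> {}"
  obtains xs where "xs \<noteq> []" "set xs \<subseteq> T" "is_path E xs"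
    and "\<And>ys. ys \<noteq> [] \<Longrightarrow> set ys \<subseteq> T \<Longrightarrow> is_path E ys \<Longrightarrow> length ys \<le> length xs"
proof -
  define P where "P xs \<longleftrightarrow> xs \<noteq> [] \<and> set xs \<subseteq> T \<and> is_path E xs" for xs
  obtain t where "t \<in> T"
    using assms(2) by blast
  then have "P [t]"
    by (simp add: P_def is_path_def)
  moreover have "length xs < card T + 1" if "P xs" for xs
    using that card_mono[OF assms(1), of "set xs"] distinct_card[of xs]
    by (simp add: P_def is_path_def)
  ultimately show thesis
    using ex_has_greatest_nat[of P "[t]" length "card T + 1"] that by (auto simp: P_def)
qed

lemma longest_path_neighbour_on_path:
  assumes sym: "\<And>x y. E x y \<Longrightarrow> E y x"
    and "xs \<noteq> []" "set xs \<subseteq> T" "is_path E xs"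
    and longest: "\<And>ys. ys \<noteq> [] \<Longrightarrow> set ys \<subseteq> T \<Longrightarrow> is_path E ys \<Longrightarrow> length ys \<le> length xs"
    and "y \<in> T" "E (xs ! 0) y"
  shows "y \<in> set xs"
proof (rule ccontr)
  assume "y \<notin> set xs"
  with assms have "is_path E (y # xs)"
    by (intro is_path_Cons) auto
  with longest[of "y # xs"] \<open>set xs \<subseteq> T\<close> \<open>y \<in> T\<close> show False
    by simp
qed

lemma forest_one_degenerate:
  assumes "forest V E"
  shows "one_degenerate V E"
  unfolding one_degenerate_def
proof (intro allI impI)
  fix T
  assume "T \<subseteq> V" "T \<noteq> {}"
  have sym: "\<And>x y. E x y \<Longrightarrow> E y x" and irrefl: "\<And>x. \<not> E x x" and "finite T"
    using assms \<open>T \<subseteq> V\<close> by (auto simp: forest_def simple_graph_def intro: finite_subset)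
  obtain xs where xs: "xs \<noteq> []" "set xs \<subseteq> T" "is_path E xs"
    and longest: "\<And>ys. ys \<noteq> [] \<Longrightarrow> set ys \<subseteq> T \<Longrightarrow> is_path E ys \<Longrightarrow> length ys \<le> length xs"
    using ex_longest_path[OF \<open>finite T\<close> \<open>T \<noteq> {}\<close>] by blast
  show "\<exists>v\<in>T. card {u\<in>T. E v u} \<le> 1"
  proof (rule ccontr)
    assume "\<not> ?thesis"
    moreover have "xs ! 0 \<in> T"
      using xs by auto
    ultimately obtain a b where "a \<in> T" "b \<in> T" "E (xs ! 0) a" "E (xs ! 0) b" "a \<noteq> b"
      using card_le_Suc0_iff_eq[of "{u\<in>T. E (xs ! 0) u}"] \<open>finite T\<close> by force
    then obtain i k where "i < length xs" "k < length xs" "E (xs ! 0) (xs ! i)" "E (xs ! 0) (xs ! k)"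
        "i \<noteq> k"
      using longest_path_neighbour_on_path[OF sym xs longest] by (metis in_set_conv_nth)
    then obtain j where "2 \<le> j" "j < length xs" "E (xs ! j) (xs ! 0)"
      using irrefl sym by (metis One_nat_def less_2_cases not_le)
    then have "is_cycle E (take (Suc j) xs)"
      using is_cycle_take_chord[OF \<open>is_path E xs\<close>] by blast
    moreover have "set (take (Suc j) xs) \<subseteq> V"
      using xs(2) \<open>T \<subseteq> V\<close> set_take_subset by fastforce
    ultimately show False
      using assms by (auto simp: forest_def)
  qed
qed

section \<open>Paths\<close>

lemma one_degenerate_path: "one_degenerate {0..<n} path_adj"
  unfolding one_degenerate_def
proof (intro allI impI)
  fix T :: "nat set"
  assume "T \<subseteq> {0..<n}" "T \<noteq> {}"
  then have "finite T"
    using finite_subset by blast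
  have "{u\<in>T. path_adj (Max T) u} \<subseteq> {Max T - 1}"
    using Max_ge[OF \<open>finite T\<close>] by (fastforce simp: path_adj_def)
  then have "card {u\<in>T. path_adj (Max T) u} \<le> 1"
    using card_mono[of "{Max T - 1}"] by fastforce
  then show "\<exists>v\<in>T. card {u\<in>T. path_adj v u} \<le> 1"
    using Max_in[OF \<open>finite T\<close> \<open>T \<noteq> {}\<close>] by blast
qed

lemma num_induced_matchings_path_le: "real (num_induced_matchings {0..<n} path_adj) \<le> alpha ^ n"
  using num_induced_matchings_le_alpha_pow[OF _ _ _ one_degenerate_path, of n]
  by (auto simp: path_adj_def)

lemma num_induced_matchings_path_recurrence:
  "num_induced_matchings {0..<n + 2} path_adj + num_induced_matchings {0..<n} path_adj
    \<le> num_induced_matchings {0..<n + 3} path_adj"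
proof -
  define M where "M k = {D. induced_matching {0..<k} path_adj D}" for k
  define g where "g D = insert (n + 1) (insert (n + 2) D)" for D
  have fin: "finite (M k)" for k
    by (simp add: M_def finite_induced_matchings)
  have "M (n + 2) \<subseteq> M (n + 3)"
    by (auto simp: M_def induced_matching_def)
  moreover have "g ` M n \<subseteq> M (n + 3)"
  proof
    fix D'
    assume "D' \<in> g ` M n"
    then obtain D where D: "induced_matching {0..<n} path_adj D" and "D' = g D"
      by (auto simp: M_def)
    have "{x\<in>D'. path_adj w x} = {x\<in>D. path_adj w x}" if "w \<in> D" for w
      using D that by (auto simp: \<open>D' = g D\<close> g_def path_adj_def induced_matching_def)
    moreover have "{x\<in>D'. path_adj w x} = {if w = n + 1 then n + 2 else n + 1}"
      if "w \<in> {n + 1, n + 2}" for w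
      using D that by (auto simp: \<open>D' = g D\<close> g_def path_adj_def induced_matching_def)
    ultimately show "D' \<in> M (n + 3)"
      using D by (auto simp: M_def \<open>D' = g D\<close> g_def induced_matching_def)
  qed
  ultimately have "card (M (n + 2) \<union> g ` M n) \<le> card (M (n + 3))"
    using fin by (intro card_mono) auto
  moreover have "M (n + 2) \<inter> g ` M n = {}"
    by (auto simp: M_def g_def induced_matching_def)
  moreover have "inj_on g (M n)"
  proof (rule inj_on_inverseI)
    show "g D - {n + 1, n + 2} = D" if "D \<in> M n" for D
      using that by (auto simp: M_def g_def induced_matching_def)
  qed
  ultimately have "card (M (n + 2)) + card (M n) \<le> card (M (n + 3))"
    using fin by (simp add: card_Un_disjoint card_image)
  then show ?thesis
    by (simp add: M_def num_induced_matchings_def)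
qed

lemma alpha_pow_le_num_induced_matchings_path:
  "alpha ^ n \<le> alpha\<^sup>2 * num_induced_matchings {0..<n} path_adj"
proof (induction n rule: less_induct)
  case (less n)
  show ?case
  proof (cases "n < 3")
    case True
    then have "alpha ^ n \<le> alpha\<^sup>2"
      by (intro alpha_pow_mono) simp
    also have "\<dots> \<le> alpha\<^sup>2 * num_induced_matchings {0..<n} path_adj"
      using mult_left_mono[of 1 _ "alpha\<^sup>2"] num_induced_matchings_pos[of "{0..<n}" path_adj]
      by simp
    finally show ?thesis .
  next
    case False
    then obtain m where "n = m + 3"
      by (metis add.commute le_add_diff_inverse not_less)
    then have "alpha ^ n = alpha ^ (m + 2) + alpha ^ m"
      by (simp add: alpha_pow_recurrence)
    also have "\<dots> \<le> alpha\<^sup>2 * num_induced_matchings {0..<m + 2} path_adj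
        + alpha\<^sup>2 * num_induced_matchings {0..<m} path_adj"
      using \<open>n = m + 3\<close> by (intro add_mono less.IH) simp_all
    also have "\<dots> \<le> alpha\<^sup>2 * num_induced_matchings {0..<n} path_adj"
      using num_induced_matchings_path_recurrence[of m] \<open>n = m + 3\<close>
      by (metis distrib_left mult_left_mono of_nat_add of_nat_mono zero_le_power2)
    finally show ?thesis .
  qed
qed

theorem mainTheorem18:
  shows "(\<forall>(V :: 'a set) E n. forest V E \<and> card V = n \<longrightarrow>
            real (num_induced_matchings V E) \<le> alpha ^ n)
       \<and> (\<lambda>n. real (num_induced_matchings {0..<n} path_adj)) \<in> \<Theta>(\<lambda>n. alpha ^ n)"
proof (intro conjI allI impI)
  fix V :: "'a set" and E n
  assume "forest V E \<and> card V = n"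
  then show "real (num_induced_matchings V E) \<le> alpha ^ n"
    using num_induced_matchings_le_alpha_pow[of E V] forest_one_degenerate[of V E]
    by (auto simp: forest_def simple_graph_def)
next
  have "1 / alpha\<^sup>2 * alpha ^ n \<le> real (num_induced_matchings {0..<n} path_adj)" for n
    using alpha_pow_le_num_induced_matchings_path[of n] alpha_gt_one by (simp add: field_simps)
  then show "(\<lambda>n. real (num_induced_matchings {0..<n} path_adj)) \<in> \<Theta>(\<lambda>n. alpha ^ n)"
    using num_induced_matchings_path_le alpha_gt_one
    by (intro bigthetaI'[of "1 / alpha\<^sup>2" 1] always_eventually) auto
qed

end
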